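(* Let $x\in[0,1)$ be rational, written in binary as $x=0.\alpha_1\alpha_2\alpha_3\ldots$ (choosing the expansion that does not end in infinitely many $1$'s). Define the walk $P_0=(0,0)$, $P_i=P_{i-1}+(1,0)$ if $\alpha_i=1$ and $P_i=P_{i-1}+(0,1)$ if $\alpha_i=0$. Let $X_i=1$ if $\gcd$ of the coordinates of $P_i$ equals $1$ and $X_i=0$ otherwise, and $\overline S_n(x)=\frac{X_1+\cdots+X_n}{n}$. Then $\lim_{n\to\infty}\overline S_n(x)$ exists and is a rational number. *)

theory Defs
  imports Complex_Main
begin

text \<open>The i-th binary digit (i \<ge> 1) of x \<in> [0,1), taken from the expansion
  x = 0.a1 a2 a3 ... that does not end in infinitely many 1's.\<close>
definition bdigit :: "real \<Rightarrow> nat \<Rightarrow> nat" where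
  "bdigit x i = nat (\<lfloor>2 ^ i * x\<rfloor> mod 2)"

fun walk :: "real \<Rightarrow> nat \<Rightarrow> nat \<times> nat" where
  "walk x 0 = (0, 0)"
| "walk x (Suc i) =
     (if bdigit x (Suc i) = 1 then (fst (walk x i) + 1, snd (walk x i))
      else (fst (walk x i), snd (walk x i) + 1))"

definition Xind :: "real \<Rightarrow> nat \<Rightarrow> nat" where
  "Xind x i = (if gcd (fst (walk x i)) (snd (walk x i)) = 1 then 1 else 0)"

definition Sbar :: "real \<Rightarrow> nat \<Rightarrow> real" where
  "Sbar x n = (\<Sum>i=1..n. real (Xind x i)) / real n"

end

theory Submission
  imports Defs
begin

text \<open>The binary digits of a rational number are eventually periodic, say with period \<open>p\<close>,
  so from some point on the walk is translated by a fixed vector \<open>(a, b)\<close> every \<open>p\<close> steps.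
  For a point \<open>(u, v)\<close> of the walk put \<open>D = b u - a v\<close>; it is periodic, hence bounded by some \<open>M\<close>.
  If \<open>D \<noteq> 0\<close>, every common divisor of \<open>(u, v) + k (a, b)\<close> divides \<open>D\<close>, hence divides \<open>M!\<close>,
  so translating by \<open>M! (a, b)\<close> does not change the gcd. If \<open>D = 0\<close>, the point lies on the ray
  through \<open>(a, b)\<close> far enough from the origin, and its coordinates are never coprime.
  Hence the coprimality indicator is eventually periodic with period \<open>M! p\<close>, and its Cesaro
  means converge to the rational average over one period.\<close>

lemma periodic_reduce:
  fixes f :: "nat \<Rightarrow> 'a"
  assumes per: "\<forall>n\<ge>N. f (n + Q) = f n" and "n \<ge> N"
  shows "f n = f (N + (n - N) mod Q)"
proof -
  have shift: "f (m + k * Q) = f m" if "m \<ge> N" for m k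
  proof (induction k)
    case (Suc k)
    have "f (m + Suc k * Q) = f ((m + k * Q) + Q)" by (simp add: algebra_simps)
    also have "\<dots> = f (m + k * Q)" using per that by simp
    finally show ?case using Suc by simp
  qed simp
  have "n = (N + (n - N) mod Q) + ((n - N) div Q) * Q" using \<open>n \<ge> N\<close> by simp
  then show ?thesis using shift[of "N + (n - N) mod Q" "(n - N) div Q"] by simp
qed

lemma periodic_bounded:
  fixes f :: "nat \<Rightarrow> 'a::linordered_idom"
  assumes "Q > 0" and per: "\<forall>n\<ge>N. f (n + Q) = f n"
  obtains B where "\<And>n. n \<ge> N \<Longrightarrow> \<bar>f n\<bar> \<le> B"
proof
  fix n assume "n \<ge> N"
  have "\<bar>f (N + (n - N) mod Q)\<bar> \<le> (\<Sum>j<Q. \<bar>f (N + j)\<bar>)"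
    by (rule member_le_sum[where f = "\<lambda>j. \<bar>f (N + j)\<bar>"]) (use \<open>Q > 0\<close> in auto)
  then show "\<bar>f n\<bar> \<le> (\<Sum>j<Q. \<bar>f (N + j)\<bar>)"
    using periodic_reduce[OF per \<open>n \<ge> N\<close>] by simp
qed

lemma sum_window_periodic:
  fixes f :: "nat \<Rightarrow> 'a::cancel_comm_monoid_add"
  assumes per: "\<forall>n\<ge>N. f (n + Q) = f n" and "n \<ge> N"
  shows "(\<Sum>i = n..<n + Q. f i) = (\<Sum>i = N..<N + Q. f i)"
  using \<open>n \<ge> N\<close>
proof (induction n rule: dec_induct)
  case (step n)
  have "(\<Sum>i = Suc n..<Suc n + Q. f i) + f n = (\<Sum>i = n..<Suc (n + Q). f i)"
    by (simp add: sum.atLeast_Suc_lessThan add_ac)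
  also have "\<dots> = (\<Sum>i = n..<n + Q. f i) + f n"
    using per step.hyps(1) by simp
  finally show ?case using step.IH by simp
qed simp

lemma bounded_divide_real_tendsto_zero:
  fixes E :: "nat \<Rightarrow> real"
  assumes "\<And>n. n \<ge> N \<Longrightarrow> \<bar>E n\<bar> \<le> B"
  shows "(\<lambda>n. E n / real n) \<longlonglongrightarrow> 0"
proof -
  have "Bseq E"
    using assms by (intro BfunI) (auto simp: eventually_sequentially)
  then show ?thesis
    using bounded_bilinear.Bfun_prod_Zfun[OF bounded_bilinear_mult _
        lim_inverse_n[unfolded tendsto_Zfun_iff]]
    by (simp add: divide_inverse tendsto_Zfun_iff)
qed

lemma cesaro_mean_eventually_periodic:
  fixes f :: "nat \<Rightarrow> real"
  assumes "Q > 0" and per: "\<forall>n\<ge>N. f (n + Q) = f n"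
  shows "(\<lambda>n. (\<Sum>i = 1..n. f i) / real n) \<longlonglongrightarrow> (\<Sum>i = N..<N + Q. f i) / real Q"
proof -
  define c where "c = (\<Sum>i = N..<N + Q. f i)"
  define E where "E n = (\<Sum>i = 1..n. f i) - c * real n / real Q" for n
  have E_per: "\<forall>n\<ge>N. E (n + Q) = E n"
  proof (intro allI impI)
    fix n assume "n \<ge> N"
    have "(\<Sum>i = 1..n + Q. f i) = (\<Sum>i = 1..n. f i) + (\<Sum>i = Suc n..<Suc n + Q. f i)"
      by (subst sum.ub_add_nat) (simp_all add: atLeastLessThanSuc_atLeastAtMost)
    also have "(\<Sum>i = Suc n..<Suc n + Q. f i) = c"
      unfolding c_def using \<open>n \<ge> N\<close> by (intro sum_window_periodic[OF per]) simp
    finally show "E (n + Q) = E n" unfolding E_def using \<open>Q > 0\<close> by (simp add: field_simps)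
  qed
  obtain B where "\<And>n. n \<ge> N \<Longrightarrow> \<bar>E n\<bar> \<le> B"
    using periodic_bounded[OF \<open>Q > 0\<close> E_per] by blast
  then have "(\<lambda>n. c / real Q + E n / real n) \<longlonglongrightarrow> c / real Q + 0"
    by (intro tendsto_add tendsto_const bounded_divide_real_tendsto_zero)
  moreover have "\<forall>\<^sub>F n in sequentially. c / real Q + E n / real n = (\<Sum>i = 1..n. f i) / real n"
    using eventually_ge_at_top[of 1]
    by eventually_elim (use \<open>Q > 0\<close> in \<open>auto simp: E_def field_simps\<close>)
  ultimately show ?thesis
    unfolding c_def[symmetric] by (auto intro: Lim_transform_eventually)
qed

lemma power_mod_eventually_periodic:
  fixes a m :: int
  assumes "m > 0"
  obtains p N where "p > 0" and "\<forall>t\<ge>N. a ^ (t + p) mod m = a ^ t mod m"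
proof -
  have "finite (range (\<lambda>k::nat. a ^ k mod m))"
    by (rule finite_subset[of _ "{0..<m}"]) (use assms in auto)
  then have "\<not> inj (\<lambda>k::nat. a ^ k mod m)"
    using finite_imageD infinite_UNIV_nat by blast
  then obtain i j where "i < j" and ij: "a ^ i mod m = a ^ j mod m"
    unfolding inj_def by (metis linorder_neqE_nat)
  have "a ^ (t + (j - i)) mod m = a ^ t mod m" if "t \<ge> i" for t
  proof -
    have "a ^ (t + (j - i)) = a ^ (t - i) * a ^ j" and "a ^ t = a ^ (t - i) * a ^ i"
      using that \<open>i < j\<close> by (simp_all flip: power_add)
    then show ?thesis using ij by (metis mod_mult_right_eq)
  qed
  then show ?thesis using that[of "j - i" i] \<open>i < j\<close> by simp
qed

lemma div_mod_2_eq_mod_double_div: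
  fixes a b :: int
  assumes "b > 0"
  shows "a div b mod 2 = a mod (2 * b) div b"
proof -
  have "a mod (b * 2) = b * (a div b mod 2) + a mod b" by (rule zmod_zmult2_eq) simp
  then show ?thesis using assms by (simp add: mult.commute)
qed

lemma bdigit_of_int_divide:
  fixes a b :: int
  assumes "b > 0"
  shows "bdigit (of_int a / of_int b) i = nat (2 ^ i * a mod (2 * b) div b)"
proof -
  have "\<lfloor>2 ^ i * (of_int a / of_int b) :: real\<rfloor> = 2 ^ i * a div b"
    by (metis floor_divide_of_int_eq of_int_mult of_int_numeral of_int_power times_divide_eq_right)
  then show ?thesis
    unfolding bdigit_def using div_mod_2_eq_mod_double_div[OF assms] by simp
qed

lemma bdigit_eventually_periodic:
  assumes "x \<in> \<rat>"
  obtains p N where "p > 0" and "\<forall>i\<ge>N. bdigit x (i + p) = bdigit x i"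
proof -
  obtain a b :: int where "b > 0" and x: "x = of_int a / of_int b"
    using Rats_cases'[OF assms] by metis
  have "2 * b > 0" using \<open>b > 0\<close> by simp
  then obtain p N where "p > 0" and per: "\<forall>t\<ge>N. (2::int) ^ (t + p) mod (2 * b) = 2 ^ t mod (2 * b)"
    by (rule power_mod_eventually_periodic)
  have "bdigit x (i + p) = bdigit x i" if "i \<ge> N" for i
  proof -
    have "2 ^ (i + p) * a mod (2 * b) = 2 ^ i * a mod (2 * b)"
      using per that by (metis mod_mult_left_eq)
    then show ?thesis unfolding x bdigit_of_int_divide[OF \<open>b > 0\<close>] by simp
  qed
  then show ?thesis using that \<open>p > 0\<close> by blast
qed

lemma dvd_fact_of_dvd_bounded:
  fixes d M :: nat and D :: int
  assumes "int d dvd D" and "D \<noteq> 0" and "\<bar>D\<bar> \<le> int M"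
  shows "d dvd fact M"
proof (rule dvd_fact)
  show "1 \<le> d" using assms(1,2) by (cases d) auto
  show "d \<le> M" using dvd_imp_le_int[OF assms(2,1)] assms(3) by simp
qed

text \<open>The quantity \<open>D\<close> is invariant under \<open>(u, v) \<mapsto> (u, v) + k (a, b)\<close>, so every common
  divisor of either pair divides \<open>D\<close> and hence \<open>M!\<close>.\<close>
lemma gcd_add_fact_mult:
  fixes u v a b M :: nat
  defines "D \<equiv> int b * int u - int a * int v"
  assumes "D \<noteq> 0" and "\<bar>D\<bar> \<le> int M"
  shows "gcd (u + fact M * a) (v + fact M * b) = gcd u v"
proof (rule dvd_antisym)
  define g where "g = gcd (u + fact M * a) (v + fact M * b)"
  have D_eq: "D = int b * int (u + fact M * a) - int a * int (v + fact M * b)"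
    by (simp add: D_def algebra_simps)
  have "int g dvd int (u + fact M * a)" and "int g dvd int (v + fact M * b)"
    unfolding int_dvd_int_iff g_def by simp_all
  then have "int g dvd D"
    unfolding D_eq by (intro dvd_diff dvd_mult)
  then have "g dvd fact M * a" and "g dvd fact M * b"
    using dvd_fact_of_dvd_bounded assms(2,3) by auto
  then show "g dvd gcd u v"
    unfolding g_def by (metis dvd_add_left_iff gcd_dvd1 gcd_dvd2 gcd_greatest)
next
  define h where "h = gcd u v"
  have "int h dvd int u" and "int h dvd int v"
    unfolding int_dvd_int_iff h_def by simp_all
  then have "int h dvd D"
    unfolding D_def by (intro dvd_diff dvd_mult)
  then have "h dvd fact M" using dvd_fact_of_dvd_bounded assms(2,3) by blast
  then show "h dvd gcd (u + fact M * a) (v + fact M * b)"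
    unfolding h_def by (intro gcd_greatest dvd_add) simp_all
qed

text \<open>With \<open>(a, b) = g (a', b')\<close> and \<open>(u, v) = s (a', b')\<close>, the point is \<open>(s + c g) (a', b')\<close>.\<close>
lemma not_coprime_add_mult_on_ray:
  fixes u v a b c :: nat
  assumes ray: "b * u = a * v" and "a + b > 0" and "c \<ge> 2"
  shows "\<not> coprime (u + c * a) (v + c * b)"
proof -
  define g where "g = gcd a b"
  have "g > 0" using \<open>a + b > 0\<close> by (simp add: g_def)
  obtain a' b' where ab: "a = a' * g" "b = b' * g" and "coprime a' b'"
    using gcd_coprime_exists[of a b] \<open>g > 0\<close> unfolding g_def by auto
  have ray': "b' * u = a' * v" using ray \<open>g > 0\<close> ab by (simp add: algebra_simps)
  obtain s where s: "u = s * a'" "v = s * b'"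
  proof (cases "a' = 0")
    case True
    then show ?thesis using \<open>coprime a' b'\<close> ray' that[of v] by simp
  next
    case False
    have "a' dvd b' * u" using ray' by simp
    then have "a' dvd u" using \<open>coprime a' b'\<close> by (simp add: coprime_dvd_mult_right_iff)
    then obtain s where "u = s * a'" by (metis dvdE mult.commute)
    then show ?thesis using that ray' False by (simp add: algebra_simps)
  qed
  have "c \<le> c * g" using \<open>g > 0\<close> by simp
  then have "2 \<le> s + c * g" using \<open>c \<ge> 2\<close> by linarith
  moreover have "u + c * a = (s + c * g) * a'" and "v + c * b = (s + c * g) * b'"
    by (simp_all add: s ab algebra_simps)
  ultimately show ?thesis using coprime_common_divisor_nat by fastforce
qed

lemma coprime_eventually_periodic:
  fixes P :: "nat \<Rightarrow> nat \<times> nat"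
  assumes "p > 0" and "a + b > 0"
    and step: "\<And>i. i \<ge> N \<Longrightarrow> P (i + p) = (fst (P i) + a, snd (P i) + b)"
  obtains Q N' where "Q > 0"
    and "\<And>i. i \<ge> N' \<Longrightarrow> coprime (fst (P (i + Q))) (snd (P (i + Q))) = coprime (fst (P i)) (snd (P i))"
proof -
  have steps: "P (i + k * p) = (fst (P i) + k * a, snd (P i) + k * b)" if "i \<ge> N" for i k
  proof (induction k)
    case (Suc k)
    have "P (i + Suc k * p) = P ((i + k * p) + p)" by (simp add: algebra_simps)
    then show ?case using step[of "i + k * p"] that Suc by simp
  qed simp
  define D where "D i = int b * int (fst (P i)) - int a * int (snd (P i))" for i
  have D_per: "\<forall>i\<ge>N. D (i + p) = D i" by (simp add: D_def step algebra_simps)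
  obtain B where B: "\<And>i. i \<ge> N \<Longrightarrow> \<bar>D i\<bar> \<le> B"
    using periodic_bounded[OF \<open>p > 0\<close> D_per] by blast
  define M where "M = nat B"
  define Q where "Q = fact M * p"
  have "coprime (fst (P (i + Q))) (snd (P (i + Q))) = coprime (fst (P i)) (snd (P i))"
    if "i \<ge> N + 2 * p" for i
  proof (cases "D i = 0")
    case False
    have "\<bar>D i\<bar> \<le> int M" using B[of i] that unfolding M_def by linarith
    then show ?thesis
      using gcd_add_fact_mult[of b "fst (P i)" a "snd (P i)" M] False steps[of i "fact M"] that
      by (simp add: D_def Q_def coprime_iff_gcd_eq_1)
  next
    case True
    define j where "j = i - 2 * p"
    have "j \<ge> N" and i: "i = j + 2 * p" using that by (simp_all add: j_def)
    have "D j = 0" using True D_per \<open>j \<ge> N\<close> by (simp add: i mult_2 add.assoc[symmetric])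
    then have ray: "b * fst (P j) = a * snd (P j)" unfolding D_def by (simp flip: of_nat_mult)
    have iQ: "i + Q = j + (2 + fact M) * p" by (simp add: i Q_def algebra_simps)
    have "P i = (fst (P j) + 2 * a, snd (P j) + 2 * b)"
      unfolding i by (rule steps[OF \<open>j \<ge> N\<close>])
    moreover have "P (i + Q) = (fst (P j) + (2 + fact M) * a, snd (P j) + (2 + fact M) * b)"
      unfolding iQ by (rule steps[OF \<open>j \<ge> N\<close>])
    ultimately show ?thesis
      using not_coprime_add_mult_on_ray[OF ray \<open>a + b > 0\<close>, of 2]
        not_coprime_add_mult_on_ray[OF ray \<open>a + b > 0\<close>, of "2 + fact M"] by simp
  qed
  moreover have "Q > 0" using \<open>p > 0\<close> by (simp add: Q_def)
  ultimately show ?thesis using that by blast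
qed

lemma walk_sum: "fst (walk x i) + snd (walk x i) = i"
  by (induction i) auto

lemma walk_mono: "fst (walk x i) \<le> fst (walk x (i + k)) \<and> snd (walk x i) \<le> snd (walk x (i + k))"
  by (induction k) auto

lemma walk_translate_periodic:
  assumes per: "\<forall>i\<ge>N. bdigit x (i + p) = bdigit x i" and "i \<ge> N"
  shows "walk x (i + p) = (fst (walk x i) + (fst (walk x (N + p)) - fst (walk x N)),
                           snd (walk x i) + (snd (walk x (N + p)) - snd (walk x N)))"
  using \<open>i \<ge> N\<close>
proof (induction i rule: dec_induct)
  case base
  then show ?case using walk_mono[of x N p] by (simp add: prod_eq_iff)
next
  case (step n)
  have "bdigit x (Suc (n + p)) = bdigit x (Suc n)"
    using per step.hyps(1) by (metis add_Suc le_Suc_eq)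
  then show ?case using step.IH by (simp add: prod_eq_iff)
qed

lemma walk_eventually_translates:
  assumes "x \<in> \<rat>"
  obtains p a b N where "p > 0" and "a + b > 0"
    and "\<And>i. i \<ge> N \<Longrightarrow> walk x (i + p) = (fst (walk x i) + a, snd (walk x i) + b)"
proof -
  obtain p N where "p > 0" and per: "\<forall>i\<ge>N. bdigit x (i + p) = bdigit x i"
    using bdigit_eventually_periodic[OF assms] .
  define a where "a = fst (walk x (N + p)) - fst (walk x N)"
  define b where "b = snd (walk x (N + p)) - snd (walk x N)"
  show ?thesis
  proof (rule that)
    show "p > 0" by fact
    have "a + b = p"
      using walk_sum[of x N] walk_sum[of x "N + p"] walk_mono[of x N p]
      unfolding a_def b_def by linarith
    then show "a + b > 0" using \<open>p > 0\<close> by simp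
    show "walk x (i + p) = (fst (walk x i) + a, snd (walk x i) + b)" if "i \<ge> N" for i
      using walk_translate_periodic[OF per that] by (simp add: a_def b_def)
  qed
qed

theorem theorem3:
  fixes x :: real
  assumes "x \<in> \<rat>" and "0 \<le> x" and "x < 1"
  shows "\<exists>L \<in> \<rat>. Sbar x \<longlonglongrightarrow> L"
proof -
  obtain p a b N where "p > 0" and "a + b > 0"
    and walk_step: "\<And>i. i \<ge> N \<Longrightarrow> walk x (i + p) = (fst (walk x i) + a, snd (walk x i) + b)"
    using walk_eventually_translates[OF assms(1)] by blast
  obtain Q N' where "Q > 0"
    and coprime_per: "\<And>i. i \<ge> N' \<Longrightarrow> coprime (fst (walk x (i + Q))) (snd (walk x (i + Q)))
                                      = coprime (fst (walk x i)) (snd (walk x i))"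
    using coprime_eventually_periodic[where P = "walk x", OF \<open>p > 0\<close> \<open>a + b > 0\<close> walk_step] by blast
  have "\<forall>i\<ge>N'. real (Xind x (i + Q)) = real (Xind x i)"
    using coprime_per by (simp add: Xind_def coprime_iff_gcd_eq_1)
  then have "Sbar x \<longlonglongrightarrow> (\<Sum>i = N'..<N' + Q. real (Xind x i)) / real Q"
    unfolding Sbar_def[abs_def] by (rule cesaro_mean_eventually_periodic[OF \<open>Q > 0\<close>])
  moreover have "(\<Sum>i = N'..<N' + Q. real (Xind x i)) / real Q \<in> \<rat>"
    by (intro Rats_divide Rats_sum Rats_of_nat)
  ultimately show ?thesis by blast
qed

end
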